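(* Let $\mathcal{P}\subseteq[0,1]^n$ be a polytope and let $P:[0,1]^n\to\mathbb{R}$ be a Bernstein polynomial of degree at most $d$ such that $P(x)\le\varepsilon$ for all $x\in\mathcal{P}$. Then for each $u\in\mathcal{H}_0(\mathcal{P})$ with $\|u\|=1$ and all $x\in\mathcal{P}$, $$|\partial_uP(x)|\le\frac{2d^2\varepsilon}{\omega_{\mathcal{H}_0(\mathcal{P})}(\mathcal{P})},$$ where $\omega_{\mathcal{H}_0(\mathcal{P})}(\mathcal{P})=\min_{\|u\|=1,\,u\in\mathcal{H}_0(\mathcal{P})}\left(\max_{p\in\mathcal{P}}\langle u,p\rangle-\min_{p\in\mathcal{P}}\langle u,p\rangle\right)$.
   Context: A Bernstein monomial is $\prod_{i=1}^n x_i^{a_i}(1-x_i)^{b_i}$ with nonnegative integers $a_i,b_i$; a Bernstein polynomial is a finite combination of Bernstein monomials with positive coefficients; its degree is its degree as a polynomial. $\mathcal{H}(\mathcal{P})$ is the affine span of $\mathcal{P}$ and $\mathcal{H}_0(\mathcal{P})=\{y-y':y,y'\in\mathcal{H}(\mathcal{P})\}$ its translate through the origin. $\partial_u$ denotes the directional derivative along $u$. *)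

theory Defs
  imports "HOL-Analysis.Analysis"
begin

definition bernstein_monomial :: "('n::finite \<Rightarrow> nat) \<Rightarrow> ('n \<Rightarrow> nat) \<Rightarrow> real^'n \<Rightarrow> real" where
  "bernstein_monomial a b x = (\<Prod>i\<in>UNIV. (x$i) ^ (a i) * (1 - x$i) ^ (b i))"

definition is_bernstein_poly :: "(real^'n::finite \<Rightarrow> real) \<Rightarrow> bool" where
  "is_bernstein_poly f \<longleftrightarrow>
     (\<exists>(S :: (('n \<Rightarrow> nat) \<times> ('n \<Rightarrow> nat)) set) c. finite S \<and> (\<forall>p\<in>S. c p > (0::real)) \<and>
        f = (\<lambda>x. \<Sum>p\<in>S. c p * bernstein_monomial (fst p) (snd p) x))"

definition poly_degree_le :: "(real^'n::finite \<Rightarrow> real) \<Rightarrow> nat \<Rightarrow> bool" where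
  "poly_degree_le f d \<longleftrightarrow>
     (\<exists>c :: ('n \<Rightarrow> nat) \<Rightarrow> real.
        f = (\<lambda>x. \<Sum>k\<in>{k :: 'n \<Rightarrow> nat. sum k UNIV \<le> d}. c k * (\<Prod>i\<in>UNIV. (x$i) ^ (k i))))"

definition H0 :: "(real^'n::finite) set \<Rightarrow> (real^'n) set" where
  "H0 Q = {y - y' | y y'. y \<in> affine hull Q \<and> y' \<in> affine hull Q}"

definition width_H0 :: "(real^'n::finite) set \<Rightarrow> real" where
  "width_H0 Q = Inf {Sup ((\<lambda>p. inner u p) ` Q) - Inf ((\<lambda>p. inner u p) ` Q) | u. u \<in> H0 Q \<and> norm u = 1}"

end

theory Submission
  imports Defs "HOL-Computational_Algebra.Polynomial"
begin

(*
  For y in Q, the function t |-> P(x + t (y - x)) is a polynomial of degree at most d with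
  values in [0, eps] on [0, 1] (Bernstein polynomials are nonnegative on the cube), so
  Markov's inequality at an endpoint of the interval gives |DP(x)(y - x)| <= d^2 eps.
  The difference body Q - Q contains the segment from 0 to omega u for every unit vector u
  of H_0(Q): otherwise a hyperplane inside H_0(Q) separates omega u from Q - Q, and its
  unit normal is a direction of H_0(Q) in which Q has width less than omega. Writing
  omega u = a - b with a, b in Q, linearity of the derivative gives
  omega |d_u P(x)| <= |DP(x)(a - x)| + |DP(x)(b - x)| <= 2 d^2 eps.

  Markov's endpoint inequality |p'(1)| <= n^2 max_[-1,1] |p| comes from Lagrange
  interpolation at the Chebyshev nodes cos(j pi / n): the weights expressing p'(1) through
  the node values alternate in sign, and the Chebyshev polynomial T_n, which takes the
  values (-1)^j at the nodes, attains the bound since T_n'(1) = n^2.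
*)

section \<open>Lagrange interpolation\<close>

definition lagrange_basis :: "(nat \<Rightarrow> 'a::field) \<Rightarrow> nat \<Rightarrow> nat \<Rightarrow> 'a poly" where
  "lagrange_basis x n j =
     smult (inverse (\<Prod>i\<in>{..n}-{j}. x j - x i)) (\<Prod>i\<in>{..n}-{j}. [:- x i, 1:])"

lemma poly_lagrange_basis_node:
  assumes "inj_on x {..n}" "j \<le> n" "k \<le> n"
  shows "poly (lagrange_basis x n j) (x k) = (if k = j then 1 else 0)"
proof -
  have "(\<Prod>i\<in>{..n}-{j}. x j - x i) \<noteq> 0"
    using assms inj_onD[OF assms(1)] by auto
  then show ?thesis
    using assms(3) by (auto simp: lagrange_basis_def poly_prod prod_zero_iff)
qed

lemma degree_lagrange_basis_le:
  assumes "j \<le> n"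
  shows "degree (lagrange_basis x n j) \<le> n"
proof -
  have "degree (\<Prod>i\<in>{..n}-{j}. [:- x i, 1:]) \<le> (\<Sum>i\<in>{..n}-{j}. degree [:- x i, 1:])"
    using degree_prod_sum_le[of "{..n}-{j}" "\<lambda>i. [:- x i, 1:]"] by (simp add: o_def)
  also have "\<dots> = n" using assms by simp
  finally show ?thesis unfolding lagrange_basis_def by (simp add: degree_smult_le order_trans)
qed

lemma lagrange_interpolation:
  assumes "inj_on x {..n}" "degree p \<le> n"
  shows "p = (\<Sum>j\<le>n. smult (poly p (x j)) (lagrange_basis x n j))"
proof (rule poly_eqI_degree)
  fix t assume "t \<in> x ` {..n}"
  then obtain k where "k \<le> n" "t = x k" by auto
  then show "poly p t = poly (\<Sum>j\<le>n. smult (poly p (x j)) (lagrange_basis x n j)) t"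
    using assms(1) by (simp add: poly_sum poly_lagrange_basis_node if_distrib cong: if_cong)
next
  have "card (x ` {..n}) = Suc n" using assms(1) by (simp add: card_image)
  then show "degree p < card (x ` {..n})"
    and "degree (\<Sum>j\<le>n. smult (poly p (x j)) (lagrange_basis x n j)) < card (x ` {..n})"
    using assms(2)
    by (auto intro!: le_imp_less_Suc degree_sum_le order.trans[OF degree_smult_le]
        degree_lagrange_basis_le)
qed

lemma poly_pderiv_lagrange_interpolation:
  assumes "inj_on x {..n}" "degree p \<le> n"
  shows "poly (pderiv p) t = (\<Sum>j\<le>n. poly p (x j) * poly (pderiv (lagrange_basis x n j)) t)"
proof -
  have "pderiv p = (\<Sum>j\<le>n. smult (poly p (x j)) (pderiv (lagrange_basis x n j)))"
    by (subst lagrange_interpolation[OF assms])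
      (simp add: higher_pderiv_sum[of 1, simplified] pderiv_smult)
  then show ?thesis by (simp add: poly_sum)
qed

lemma poly_pderiv_prod_linear_nonneg:
  fixes x :: "'i \<Rightarrow> real"
  assumes "\<And>i. i \<in> A \<Longrightarrow> x i \<le> t"
  shows "0 \<le> poly (pderiv (\<Prod>i\<in>A. [:- x i, 1:])) t"
  using assms by (cases "finite A")
    (auto simp: pderiv_prod poly_sum poly_prod pderiv_pCons intro!: sum_nonneg prod_nonneg)

lemma prod_node_differences_sign:
  fixes x :: "nat \<Rightarrow> real"
  assumes decreasing: "\<And>i j. i < j \<Longrightarrow> j \<le> n \<Longrightarrow> x j < x i" and "j \<le> n"
  shows "0 < (-1) ^ j * (\<Prod>i\<in>{..n}-{j}. x j - x i)"
proof -
  have split: "{..n}-{j} = {..<j} \<union> {Suc j..n}" using \<open>j \<le> n\<close> by auto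
  have "(\<Prod>i\<in>{..n}-{j}. x j - x i) = (\<Prod>i<j. x j - x i) * (\<Prod>i\<in>{Suc j..n}. x j - x i)"
    unfolding split by (rule prod.union_disjoint) auto
  also have "(\<Prod>i<j. x j - x i) = (-1) ^ j * (\<Prod>i<j. x i - x j)"
    using prod_uminus[of "\<lambda>i. x i - x j" "{..<j}"] by simp
  finally have "(-1) ^ j * (\<Prod>i\<in>{..n}-{j}. x j - x i)
      = (\<Prod>i<j. x i - x j) * (\<Prod>i\<in>{Suc j..n}. x j - x i)"
    by (simp flip: power_mult_distrib)
  also have "\<dots> > 0"
    using decreasing \<open>j \<le> n\<close> by (intro mult_pos_pos prod_pos) auto
  finally show ?thesis .
qed

section \<open>Markov's inequality\<close>

fun chebyshev_poly :: "nat \<Rightarrow> real poly" where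
  "chebyshev_poly 0 = 1"
| "chebyshev_poly (Suc 0) = [:0, 1:]"
| "chebyshev_poly (Suc (Suc n)) = [:0, 2:] * chebyshev_poly (Suc n) - chebyshev_poly n"

lemma poly_chebyshev_poly_cos: "poly (chebyshev_poly n) (cos t) = cos (real n * t)"
proof (induction n rule: chebyshev_poly.induct)
  case (3 n)
  have "cos (real (Suc (Suc n)) * t) + cos (real n * t) = 2 * cos t * cos (real (Suc n) * t)"
    using cos_add[of "real (Suc n) * t" t] cos_diff[of "real (Suc n) * t" t]
    by (simp add: algebra_simps)
  with 3 show ?case by (simp add: algebra_simps)
qed auto

lemma degree_chebyshev_poly_le: "degree (chebyshev_poly n) \<le> n"
proof (induction n rule: chebyshev_poly.induct)
  case (3 n)
  have "degree ([:0, 2:] * chebyshev_poly (Suc n)) \<le> Suc (Suc n)"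
    using degree_mult_le[of "[:0, 2:]" "chebyshev_poly (Suc n)"] 3 by simp
  with 3 show ?case by (auto intro: degree_diff_le)
qed auto

lemma poly_chebyshev_poly_one: "poly (chebyshev_poly n) 1 = 1"
  using poly_chebyshev_poly_cos[of n 0] by simp

lemma poly_pderiv_chebyshev_poly_one: "poly (pderiv (chebyshev_poly n)) 1 = real n ^ 2"
  by (induction n rule: chebyshev_poly.induct)
    (auto simp: pderiv_diff pderiv_pCons pderiv_smult poly_chebyshev_poly_one power2_eq_square
      algebra_simps)

definition chebyshev_node :: "nat \<Rightarrow> nat \<Rightarrow> real" where
  "chebyshev_node n j = cos (real j * pi / real n)"

lemma chebyshev_node_less:
  assumes "i < j" "j \<le> n"
  shows "chebyshev_node n j < chebyshev_node n i"
proof -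
  have "real i * pi / real n < real j * pi / real n" "real j * pi / real n \<le> pi"
    using assms by (auto simp: field_simps)
  then show ?thesis
    unfolding chebyshev_node_def by (intro cos_monotone_0_pi) auto
qed

lemma inj_on_chebyshev_node: "inj_on (chebyshev_node n) {..n}"
  by (intro inj_onI)
    (metis atMost_iff chebyshev_node_less less_irrefl linorder_cases order.strict_trans1)

lemma poly_chebyshev_poly_node:
  assumes "j \<le> n"
  shows "poly (chebyshev_poly n) (chebyshev_node n j) = (-1) ^ j"
proof -
  have "real n * (real j * pi / real n) = real j * pi" using assms by auto
  then show ?thesis unfolding chebyshev_node_def poly_chebyshev_poly_cos by (simp add: cos_npi)
qed

lemma chebyshev_lagrange_weight_sign:
  assumes "j \<le> n"
  shows "0 \<le> (-1) ^ j * poly (pderiv (lagrange_basis (chebyshev_node n) n j)) 1"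
proof -
  let ?D = "\<Prod>i\<in>{..n}-{j}. chebyshev_node n j - chebyshev_node n i"
  have "(-1) ^ j * poly (pderiv (lagrange_basis (chebyshev_node n) n j)) 1
      = inverse ((-1) ^ j * ?D) * poly (pderiv (\<Prod>i\<in>{..n}-{j}. [:- chebyshev_node n i, 1:])) 1"
    by (simp add: lagrange_basis_def pderiv_smult inverse_mult_distrib power_inverse[symmetric])
  also have "\<dots> \<ge> 0"
  proof (rule mult_nonneg_nonneg)
    show "0 \<le> inverse ((-1) ^ j * ?D)"
      using prod_node_differences_sign[of n "chebyshev_node n", OF chebyshev_node_less assms]
      by (simp del: inverse_mult_distrib)
    show "0 \<le> poly (pderiv (\<Prod>i\<in>{..n}-{j}. [:- chebyshev_node n i, 1:])) 1"
      by (rule poly_pderiv_prod_linear_nonneg) (simp add: chebyshev_node_def)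
  qed
  finally show ?thesis .
qed

lemma markov_inequality_at_one:
  fixes p :: "real poly"
  assumes "degree p \<le> n" "\<And>s. s \<in> {-1..1} \<Longrightarrow> \<bar>poly p s\<bar> \<le> M"
  shows "\<bar>poly (pderiv p) 1\<bar> \<le> real n ^ 2 * M"
proof -
  define w where "w j = poly (pderiv (lagrange_basis (chebyshev_node n) n j)) 1" for j
  have "\<bar>poly (pderiv p) 1\<bar> = \<bar>\<Sum>j\<le>n. poly p (chebyshev_node n j) * w j\<bar>"
    using poly_pderiv_lagrange_interpolation[OF inj_on_chebyshev_node assms(1)] by (simp add: w_def)
  also have "\<dots> \<le> (\<Sum>j\<le>n. M * ((-1) ^ j * w j))"
  proof (rule order.trans[OF sum_abs sum_mono])
    fix j assume "j \<in> {..n}"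
    then have "\<bar>w j\<bar> = (-1) ^ j * w j"
      using chebyshev_lagrange_weight_sign[of j n] abs_mult[of "(-1) ^ j" "w j"]
      by (simp add: w_def power_abs)
    moreover have "\<bar>poly p (chebyshev_node n j)\<bar> \<le> M"
      using assms(2) by (simp add: chebyshev_node_def)
    ultimately show "\<bar>poly p (chebyshev_node n j) * w j\<bar> \<le> M * ((-1) ^ j * w j)"
      by (metis abs_ge_zero abs_mult mult_right_mono)
  qed
  also have "\<dots> = M * (\<Sum>j\<le>n. poly (chebyshev_poly n) (chebyshev_node n j) * w j)"
    by (simp add: sum_distrib_left poly_chebyshev_poly_node)
  also have "\<dots> = M * real n ^ 2"
    using poly_pderiv_lagrange_interpolation[where x = "chebyshev_node n" and p = "chebyshev_poly n"
        and t = 1, OF inj_on_chebyshev_node degree_chebyshev_poly_le]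
    by (simp add: w_def poly_pderiv_chebyshev_poly_one)
  finally show ?thesis by (simp add: mult.commute)
qed

lemma markov_inequality_unit_interval:
  fixes p :: "real poly"
  assumes "degree p \<le> n" "\<And>t. t \<in> {0..1} \<Longrightarrow> a \<le> poly p t \<and> poly p t \<le> b"
  shows "\<bar>poly (pderiv p) 0\<bar> \<le> real n ^ 2 * (b - a)"
proof -
  define r where "r = (p - [:(a + b) / 2:]) \<circ>\<^sub>p [:1/2, -1/2:]"
  have "degree r \<le> n"
    using assms(1) by (simp add: r_def degree_pcompose degree_diff_le)
  moreover have "\<bar>poly r s\<bar> \<le> (b - a) / 2" if "s \<in> {-1..1}" for s
  proof -
    have "a \<le> poly p (1/2 - s/2)" "poly p (1/2 - s/2) \<le> b"
      using assms(2)[of "1/2 - s/2"] that by auto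
    then show ?thesis by (auto simp: r_def poly_pcompose field_simps split: abs_split)
  qed
  ultimately have "\<bar>poly (pderiv r) 1\<bar> \<le> real n ^ 2 * ((b - a) / 2)"
    by (rule markov_inequality_at_one)
  moreover have "poly (pderiv r) 1 = - poly (pderiv p) 0 / 2"
    by (simp add: r_def pderiv_pcompose poly_pcompose pderiv_diff pderiv_pCons)
  ultimately show ?thesis by simp
qed

section \<open>Polynomials on lines\<close>

lemma is_bernstein_poly_nonneg:
  assumes "is_bernstein_poly f" "\<forall>i. 0 \<le> x$i \<and> x$i \<le> 1"
  shows "0 \<le> f x"
proof -
  obtain S c where "\<forall>p\<in>S. 0 < c p" "f = (\<lambda>x. \<Sum>p\<in>S. c p * bernstein_monomial (fst p) (snd p) x)"
    using assms(1) unfolding is_bernstein_poly_def by blast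
  moreover have "0 \<le> bernstein_monomial a b x" for a b
    using assms(2) unfolding bernstein_monomial_def by (auto intro!: prod_nonneg)
  ultimately show ?thesis by (auto intro!: sum_nonneg mult_nonneg_nonneg simp: less_imp_le)
qed

lemma finite_multidegrees_le: "finite {k :: 'n::finite \<Rightarrow> nat. sum k UNIV \<le> d}"
proof (rule finite_subset)
  show "{k :: 'n \<Rightarrow> nat. sum k UNIV \<le> d} \<subseteq> (\<Pi>\<^sub>E i\<in>UNIV. {..d})"
  proof
    fix k :: "'n \<Rightarrow> nat" assume "k \<in> {k. sum k UNIV \<le> d}"
    then have "k i \<le> d" for i
      using member_le_sum[of i UNIV k] by simp
    then show "k \<in> (\<Pi>\<^sub>E i\<in>UNIV. {..d})" by (simp add: PiE_UNIV_domain)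
  qed
qed (simp add: finite_PiE)

lemma poly_degree_le_on_line:
  fixes f :: "real^'n \<Rightarrow> real"
  assumes "poly_degree_le f d"
  obtains p where "degree p \<le> d" "\<And>t. f (x + t *\<^sub>R v) = poly p t"
proof -
  obtain c where f: "f = (\<lambda>x. \<Sum>k\<in>{k. sum k UNIV \<le> d}. c k * (\<Prod>i\<in>UNIV. (x$i) ^ (k i)))"
    using assms unfolding poly_degree_le_def by blast
  define p where "p = (\<Sum>k\<in>{k. sum k UNIV \<le> d}. smult (c k) (\<Prod>i\<in>UNIV. [:x$i, v$i:] ^ (k i)))"
  have "degree (\<Prod>i\<in>UNIV. [:x$i, v$i:] ^ (k i)) \<le> d" if "sum k UNIV \<le> d" for k
  proof -
    have "degree (\<Prod>i\<in>UNIV. [:x$i, v$i:] ^ (k i)) \<le> (\<Sum>i\<in>UNIV. degree ([:x$i, v$i:] ^ (k i)))"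
      using degree_prod_sum_le[of UNIV "\<lambda>i. [:x$i, v$i:] ^ (k i)"] by (simp add: o_def)
    also have "\<dots> \<le> sum k UNIV"
      by (intro sum_mono order.trans[OF degree_power_le]) simp
    finally show ?thesis using that by simp
  qed
  then have "degree p \<le> d"
    unfolding p_def
    by (auto intro!: degree_sum_le finite_multidegrees_le order.trans[OF degree_smult_le])
  moreover have "f (x + t *\<^sub>R v) = poly p t" for t
    unfolding f p_def by (simp add: poly_sum poly_prod algebra_simps)
  ultimately show ?thesis using that by blast
qed

lemma poly_degree_le_differentiable:
  fixes f :: "real^'n \<Rightarrow> real"
  assumes "poly_degree_le f d"
  shows "f differentiable (at x)"
proof -
  obtain c where f: "f = (\<lambda>x. \<Sum>k\<in>{k. sum k UNIV \<le> d}. c k * (\<Prod>i\<in>UNIV. (x$i) ^ (k i)))"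
    using assms unfolding poly_degree_le_def by blast
  have nth: "((\<lambda>x. x$i) has_derivative (\<lambda>y. y$i)) (at x)" for i :: 'n
    by (rule bounded_linear_imp_has_derivative[OF bounded_linear_vec_nth])
  have "(\<lambda>x. \<Prod>i\<in>UNIV. (x$i) ^ (k i)) differentiable (at x)" for k
    unfolding differentiable_def
    by (rule exI, rule has_derivative_prod, rule has_derivative_power, rule nth)
  then show ?thesis
    unfolding f
    by (intro differentiable_sum differentiable_mult differentiable_const
        finite_multidegrees_le ballI)
qed

lemma has_real_derivative_along_line:
  fixes f :: "'a::real_normed_vector \<Rightarrow> real"
  assumes "(f has_derivative D) (at x)"
  shows "((\<lambda>t. f (x + t *\<^sub>R v)) has_real_derivative D v) (at 0)"
proof -
  have "((\<lambda>t. x + t *\<^sub>R v) has_derivative (\<lambda>t. t *\<^sub>R v)) (at 0)"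
    by (auto intro!: derivative_eq_intros)
  from has_derivative_compose[OF this] assms
  have "((\<lambda>t. f (x + t *\<^sub>R v)) has_derivative (\<lambda>t. D (t *\<^sub>R v))) (at 0)" by simp
  moreover have "(\<lambda>t. D (t *\<^sub>R v)) = (*) (D v)"
    using linear_scale[OF has_derivative_linear[OF assms]] by auto
  ultimately show ?thesis by (simp add: has_field_derivative_def)
qed

lemma markov_inequality_directional_derivative:
  fixes f :: "real^'n \<Rightarrow> real"
  assumes "poly_degree_le f d" "(f has_derivative D) (at x)"
    and "convex S" "x \<in> S" "x + v \<in> S" "\<And>y. y \<in> S \<Longrightarrow> a \<le> f y \<and> f y \<le> b"
  shows "\<bar>D v\<bar> \<le> real d ^ 2 * (b - a)"
proof -
  obtain p where p: "degree p \<le> d" "\<And>t. f (x + t *\<^sub>R v) = poly p t"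
    using poly_degree_le_on_line[OF assms(1)] by blast
  have "((\<lambda>t. f (x + t *\<^sub>R v)) has_real_derivative D v) (at 0)"
    by (rule has_real_derivative_along_line[OF assms(2)])
  then have "D v = poly (pderiv p) 0"
    unfolding p(2) using DERIV_unique poly_DERIV by blast
  moreover have "a \<le> poly p t \<and> poly p t \<le> b" if "t \<in> {0..1}" for t
  proof -
    have "(1 - t) *\<^sub>R x + t *\<^sub>R (x + v) \<in> S"
      using that by (intro convexD_alt assms(3-5)) auto
    then have "x + t *\<^sub>R v \<in> S" by (simp add: algebra_simps)
    then show ?thesis
      using assms(6) p(2) by metis
  qed
  ultimately show ?thesis
    using markov_inequality_unit_interval[OF p(1)] by simp
qed

section \<open>Widths in directions of the affine hull\<close>

definition directional_width :: "'a::real_inner set \<Rightarrow> 'a \<Rightarrow> real" where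
  "directional_width K e = Sup (inner e ` K) - Inf (inner e ` K)"

lemma inner_diff_le_directional_width:
  fixes K :: "'a::real_inner set"
  assumes "compact K" "a \<in> K" "b \<in> K"
  shows "inner e (a - b) \<le> directional_width K e"
proof -
  have "compact (inner e ` K)"
    using assms(1) by (intro compact_continuous_image continuous_intros)
  then have "bdd_above (inner e ` K)" "bdd_below (inner e ` K)"
    by (simp_all add: bounded_imp_bdd_above bounded_imp_bdd_below compact_imp_bounded)
  then have "inner e a \<le> Sup (inner e ` K)" "Inf (inner e ` K) \<le> inner e b"
    using assms(2,3) by (simp_all add: cSup_upper cInf_lower)
  then show ?thesis
    unfolding directional_width_def by (simp add: inner_diff_right)
qed

lemma directional_width_le:
  assumes "K \<noteq> {}" "\<And>a b. a \<in> K \<Longrightarrow> b \<in> K \<Longrightarrow> inner e (a - b) \<le> c"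
  shows "directional_width K e \<le> c"
proof -
  have "Sup (inner e ` K) \<le> c + inner e b" if "b \<in> K" for b
    using assms that by (intro cSup_least) (auto simp: inner_diff_right algebra_simps)
  then have "Sup (inner e ` K) - c \<le> Inf (inner e ` K)"
    using assms(1) by (intro cInf_greatest) (auto simp: algebra_simps)
  then show ?thesis
    unfolding directional_width_def by simp
qed

lemma directional_width_nonneg:
  fixes K :: "'a::real_inner set"
  assumes "compact K" "K \<noteq> {}"
  shows "0 \<le> directional_width K e"
  using assms inner_diff_le_directional_width[of K _ _ e] by fastforce

lemma directional_width_lipschitz:
  fixes K :: "'a::real_inner set"
  assumes "compact K"
  shows "directional_width K e \<le> directional_width K e' + norm (e - e') * diameter K"
proof (cases "K = {}")
  case False
  show ?thesis
  proof (rule directional_width_le[OF False])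
    fix a b assume ab: "a \<in> K" "b \<in> K"
    have "inner (e - e') (a - b) \<le> norm (e - e') * norm (a - b)"
      by (rule norm_cauchy_schwarz)
    also have "\<dots> \<le> norm (e - e') * diameter K"
      using diameter_bounded_bound[OF compact_imp_bounded[OF assms] ab]
      by (simp add: dist_norm mult_left_mono)
    finally show "inner e (a - b) \<le> directional_width K e' + norm (e - e') * diameter K"
      using inner_diff_le_directional_width[OF assms ab, of e'] by (simp add: inner_diff_left)
  qed
qed (simp add: directional_width_def)

lemma continuous_on_directional_width:
  fixes K :: "'a::real_inner set"
  assumes "compact K"
  shows "continuous_on UNIV (directional_width K)"
proof (rule lipschitz_on_continuous_on)
  show "(diameter K)-lipschitz_on UNIV (directional_width K)"
  proof (rule lipschitz_onI)
    fix e e' :: 'a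
    show "dist (directional_width K e) (directional_width K e') \<le> diameter K * dist e e'"
      using directional_width_lipschitz[OF assms, of e e']
        directional_width_lipschitz[OF assms, of e' e]
      by (simp add: dist_real_def dist_norm norm_minus_commute abs_le_iff mult.commute)
  qed (simp add: diameter_ge_0 compact_imp_bounded assms)
qed

lemma mem_H0_imp_nonempty: "e \<in> H0 K \<Longrightarrow> K \<noteq> {}"
  by (auto simp: H0_def)

lemma diff_mem_H0: "a \<in> K \<Longrightarrow> b \<in> K \<Longrightarrow> a - b \<in> H0 K"
  unfolding H0_def by (blast intro: hull_inc)

lemma H0_eq_translated_affine_hull:
  assumes "a \<in> affine hull K"
  shows "H0 K = (\<lambda>y. y - a) ` (affine hull K)"
proof
  show "(\<lambda>y. y - a) ` (affine hull K) \<subseteq> H0 K"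
    using assms unfolding H0_def by blast
  show "H0 K \<subseteq> (\<lambda>y. y - a) ` (affine hull K)"
  proof
    fix z assume "z \<in> H0 K"
    then obtain y y' where "z = y - y'" "y \<in> affine hull K" "y' \<in> affine hull K"
      unfolding H0_def by blast
    moreover from this have "a + 1 *\<^sub>R (y - y') \<in> affine hull K"
      by (intro mem_affine_3_minus affine_affine_hull assms)
    ultimately show "z \<in> (\<lambda>y. y - a) ` (affine hull K)"
      by (intro image_eqI[of _ _ "a + (y - y')"]) auto
  qed
qed

lemma subspace_H0:
  assumes "K \<noteq> {}"
  shows "subspace (H0 K)"
proof -
  obtain a where "a \<in> affine hull K"
    using assms hull_subset by fastforce
  then show ?thesis
    using H0_eq_translated_affine_hull affine_diffs_subspace_subtract[OF affine_affine_hull]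
    by metis
qed

lemma directional_width_pos:
  assumes "compact K" "e \<in> H0 K" "e \<noteq> 0"
  shows "0 < directional_width K e"
proof (rule ccontr)
  assume "\<not> 0 < directional_width K e"
  obtain y y' where e: "e = y - y'" "y \<in> affine hull K" "y' \<in> affine hull K"
    using assms(2) unfolding H0_def by blast
  obtain b where b: "b \<in> K"
    using mem_H0_imp_nonempty[OF assms(2)] by blast
  have "inner e a = inner e b" if "a \<in> K" for a
    using inner_diff_le_directional_width[OF assms(1) that b, of e]
      inner_diff_le_directional_width[OF assms(1) b that, of e] \<open>\<not> 0 < directional_width K e\<close>
    by (simp add: inner_diff_right)
  then have "affine hull K \<subseteq> {p. inner e p = inner e b}"
    by (intro hull_minimal) (auto simp: affine_hyperplane)
  then have "inner e y = inner e b" "inner e y' = inner e b"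
    using e(2,3) by blast+
  then have "inner e e = 0"
    unfolding e(1) by (simp add: inner_diff_right)
  then show False using assms(3) by simp
qed

lemma width_H0_eq_Inf: "width_H0 K = Inf (directional_width K ` (H0 K \<inter> sphere 0 1))"
  unfolding width_H0_def directional_width_def by (rule arg_cong[where f = Inf]) auto

lemma width_H0_le_directional_width:
  assumes "compact K" "e \<in> H0 K" "norm e = 1"
  shows "width_H0 K \<le> directional_width K e"
proof -
  have "K \<noteq> {}" using mem_H0_imp_nonempty[OF assms(2)] .
  then show ?thesis
    unfolding width_H0_eq_Inf using assms directional_width_nonneg[OF assms(1)]
    by (intro cInf_lower bdd_belowI[of _ 0]) auto
qed

lemma width_H0_pos:
  assumes "compact K" "u \<in> H0 K" "norm u = 1"
  shows "0 < width_H0 K"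
proof -
  let ?U = "H0 K \<inter> sphere 0 1"
  have "K \<noteq> {}" using mem_H0_imp_nonempty[OF assms(2)] .
  then have "compact ?U"
    using closed_subspace[OF subspace_H0] by (intro closed_Int_compact) auto
  moreover have "?U \<noteq> {}" using assms by auto
  ultimately obtain e where
    e: "e \<in> ?U" "\<And>e'. e' \<in> ?U \<Longrightarrow> directional_width K e \<le> directional_width K e'"
    using continuous_attains_inf
      continuous_on_subset[OF continuous_on_directional_width[OF assms(1)] subset_UNIV]
    by metis
  have "directional_width K e \<le> width_H0 K"
    unfolding width_H0_eq_Inf using e \<open>?U \<noteq> {}\<close> by (intro cInf_greatest) auto
  moreover have "0 < directional_width K e"
    using e(1) by (intro directional_width_pos assms(1)) auto
  ultimately show ?thesis by simp
qed

lemma separating_hyperplane_closed_point_subspace: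
  fixes z :: "'a::euclidean_space"
  assumes "convex S" "closed S" "S \<noteq> {}" "z \<notin> S" "subspace V" "S \<subseteq> V" "z \<in> V"
  obtains e c where "e \<in> V" "norm e = 1" "\<And>y. y \<in> S \<Longrightarrow> inner e y < c" "c < inner e z"
proof -
  obtain a b where ab: "inner a z < b" "\<And>y. y \<in> S \<Longrightarrow> b < inner a y"
    using separating_hyperplane_closed_point[OF assms(1,2,4)] by blast
  obtain v w where vw: "v \<in> span V" "\<And>y. y \<in> span V \<Longrightarrow> orthogonal w y" "- a = v + w"
    using orthogonal_subspace_decomp_exists by blast
  have "v \<in> V"
    using vw(1) span_eq_iff[of V] assms(5) by blast
  have inner_v: "inner v y = - inner a y" if "y \<in> V" for y
    using vw(2)[of y] that span_base[of y V] arg_cong[OF vw(3), of "\<lambda>x. inner x y"]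
    by (simp add: orthogonal_def inner_add_left)
  have below: "inner v y < - b" if "y \<in> S" for y
    using ab(2)[OF that] inner_v[of y] that assms(6) by auto
  have above: "- b < inner v z"
    using ab(1) inner_v[OF assms(7)] by simp
  have "v \<noteq> 0"
  proof
    assume "v = 0"
    obtain y where "y \<in> S" using assms(3) by blast
    with below above \<open>v = 0\<close> show False by simp
  qed
  show ?thesis
  proof (rule that)
    show "(1 / norm v) *\<^sub>R v \<in> V"
      using \<open>v \<in> V\<close> assms(5) by (simp add: subspace_scale)
    show "norm ((1 / norm v) *\<^sub>R v) = 1"
      using \<open>v \<noteq> 0\<close> by simp
    show "inner ((1 / norm v) *\<^sub>R v) y < - b / norm v" if "y \<in> S" for y
      using divide_strict_right_mono[OF below[OF that], of "norm v"] \<open>v \<noteq> 0\<close> by simp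
    show "- b / norm v < inner ((1 / norm v) *\<^sub>R v) z"
      using divide_strict_right_mono[OF above, of "norm v"] \<open>v \<noteq> 0\<close> by simp
  qed
qed

lemma width_H0_chord:
  fixes K :: "(real^'n) set"
  assumes "compact K" "convex K" "u \<in> H0 K" "norm u = 1"
  obtains a b where "a \<in> K" "b \<in> K" "a - b = width_H0 K *\<^sub>R u"
proof -
  define D where "D = (\<Union>a\<in>K. \<Union>b\<in>K. {a - b})"
  have "K \<noteq> {}" using mem_H0_imp_nonempty[OF assms(3)] .
  have subspace: "subspace (H0 K)" using subspace_H0[OF \<open>K \<noteq> {}\<close>] .
  have "width_H0 K *\<^sub>R u \<in> D"
  proof (rule ccontr)
    assume outside: "width_H0 K *\<^sub>R u \<notin> D"
    have convex: "convex D" unfolding D_def by (rule convex_differences[OF assms(2) assms(2)])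
    have closed: "closed D"
      unfolding D_def by (intro compact_imp_closed compact_differences' assms(1))
    have nonempty: "D \<noteq> {}" using \<open>K \<noteq> {}\<close> unfolding D_def by blast
    have sub: "D \<subseteq> H0 K" unfolding D_def by (blast intro: diff_mem_H0)
    have inside: "width_H0 K *\<^sub>R u \<in> H0 K"
      using assms(3) subspace by (simp add: subspace_scale)
    obtain e c where e: "e \<in> H0 K" "norm e = 1" "\<And>y. y \<in> D \<Longrightarrow> inner e y < c"
      "c < inner e (width_H0 K *\<^sub>R u)"
      using separating_hyperplane_closed_point_subspace[OF convex closed nonempty outside
          subspace sub inside] by blast
    have "directional_width K e \<le> c"
    proof (rule directional_width_le[OF \<open>K \<noteq> {}\<close>])
      fix a b assume "a \<in> K" "b \<in> K"
      then have "a - b \<in> D" unfolding D_def by blast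
      then show "inner e (a - b) \<le> c" using e(3) by (simp add: less_imp_le)
    qed
    also have "c < width_H0 K * inner e u"
      using e(4) by simp
    also have "\<dots> \<le> width_H0 K"
      using width_H0_pos[OF assms(1,3,4)] norm_cauchy_schwarz[of e u] e(2) assms(4)
      by (simp add: mult_left_le)
    also have "\<dots> \<le> directional_width K e"
      by (rule width_H0_le_directional_width[OF assms(1) e(1,2)])
    finally show False by simp
  qed
  then obtain a b where "a \<in> K" "b \<in> K" "width_H0 K *\<^sub>R u = a - b"
    unfolding D_def by blast
  then show ?thesis using that by simp
qed

theorem lemma7p9:
  fixes Q :: "(real^'n) set" and P :: "real^'n \<Rightarrow> real" and d :: nat and \<epsilon> :: real
  assumes "polytope Q"
    and "Q \<subseteq> {x. \<forall>i. 0 \<le> x$i \<and> x$i \<le> 1}"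
    and "is_bernstein_poly P"
    and "poly_degree_le P d"
    and "\<forall>x\<in>Q. P x \<le> \<epsilon>"
  shows "\<forall>u\<in>H0 Q. norm u = 1 \<longrightarrow> (\<forall>x\<in>Q.
           \<bar>deriv (\<lambda>t. P (x + t *\<^sub>R u)) 0\<bar> \<le> 2 * (real d)^2 * \<epsilon> / width_H0 Q)"
proof (intro ballI impI)
  fix u x assume u: "u \<in> H0 Q" "norm u = 1" and x: "x \<in> Q"
  have Q: "compact Q" "convex Q"
    using assms(1) by (simp_all add: polytope_imp_compact polytope_imp_convex)
  obtain D where D: "(P has_derivative D) (at x)"
    using poly_degree_le_differentiable[OF assms(4)] unfolding differentiable_def by blast
  have lin: "linear D" using has_derivative_linear[OF D] .
  have bounds: "0 \<le> P y \<and> P y \<le> \<epsilon>" if "y \<in> Q" for y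
    using is_bernstein_poly_nonneg[OF assms(3)] assms(2,5) that by blast
  have markov: "\<bar>D (y - x)\<bar> \<le> real d ^ 2 * \<epsilon>" if "y \<in> Q" for y
    using markov_inequality_directional_derivative[OF assms(4) D Q(2) x, of "y - x" 0 \<epsilon>]
      bounds that by simp
  obtain a b where ab: "a \<in> Q" "b \<in> Q" "a - b = width_H0 Q *\<^sub>R u"
    using width_H0_chord[OF Q u] .
  have "width_H0 Q * D u = D (a - x) - D (b - x)"
    using ab(3) by (simp add: linear_scale[OF lin] flip: linear_diff[OF lin])
  then have "width_H0 Q * \<bar>D u\<bar> \<le> 2 * real d ^ 2 * \<epsilon>"
    using markov[OF ab(1)] markov[OF ab(2)] width_H0_pos[OF Q(1) u] by (simp add: abs_mult)
  moreover have "deriv (\<lambda>t. P (x + t *\<^sub>R u)) 0 = D u"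
    by (rule DERIV_imp_deriv[OF has_real_derivative_along_line[OF D]])
  ultimately show "\<bar>deriv (\<lambda>t. P (x + t *\<^sub>R u)) 0\<bar> \<le> 2 * (real d)^2 * \<epsilon> / width_H0 Q"
    using width_H0_pos[OF Q(1) u] by (simp add: pos_le_divide_eq mult.commute)
qed

end
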